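(* Suppose (A.1) $\nabla f$ is Lipschitz continuous on $\mathbb{R}^n$ with modulus $L>0$ and (A.3) there are $\mu_f\in\mathbb{R}$, $\mu_r\ge0$ with $\bar\mu:=\mu_f+\mu_r>0$ such that $f-\frac{\mu_f}{2}\|\cdot\|^2$ and $r-\frac{\mu_r}{2}\|\cdot\|^2$ are convex. Let $\Lambda\in\mathbb S^n_{++}$ with $\lambda_MI\succeq\Lambda\succeq\lambda_mI$, and let $x^*$ be the unique minimizer of $\psi=f+r$. For $\tau>0$ set $$b_1:=L-2\lambda_m-\mu_r,\quad b_2:=\frac{(\lambda_M+\mu_r)^2}{\bar\mu},\quad B_1(\tau):=\frac{1+\tau}{\bar\mu}\big(\sqrt{b_1+b_2+\tau}+\sqrt{b_2}\big)^2.$$ Then for each $\tau>0$ there is a constant $B_2(\tau)>0$ (depending only on $\tau$ and on $L,\mu_f,\mu_r,\lambda_m,\lambda_M$) such that for all $x\in\mathbb{R}^n$ and every sample mini-batch $s$, $$\|x-x^*\|^2\le B_1(\tau)\|F^\Lambda_s(x)\|^2+B_2(\tau)\|\nabla f(x)-G_s(x)\|^2.$$ If the exact gradient is used (i.e. $G_s\equiv\nabla f$), then $\|x-x^*\|^2\le B_1(0)\|F^\Lambda(x)\|^2$ for all $x$.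
   Context: $f:\mathbb{R}^n\to\mathbb{R}$ continuously differentiable, $r:\mathbb{R}^n\to(-\infty,+\infty]$ convex, lsc, proper, $\psi:=f+r$. For $\Lambda\in\mathbb S^n_{++}$, $\|x\|_\Lambda^2=\langle x,\Lambda x\rangle$, $\mathrm{prox}^\Lambda_r(x):=\arg\min_y r(y)+\frac12\|x-y\|_\Lambda^2$, $F^\Lambda(x):=x-\mathrm{prox}^\Lambda_r(x-\Lambda^{-1}\nabla f(x))$. A sample mini-batch $s$ yields a stochastic gradient $G_s(x)\in\mathbb{R}^n$ (e.g. $G_s(x)=\frac1m\sum_i\mathcal G(x,s_i)$ for an oracle $\mathcal G$), and $F^\Lambda_s(x):=x-\mathrm{prox}^\Lambda_r(x-\Lambda^{-1}G_s(x))$. Note that $b_1+b_2\ge0$ under the assumptions. *)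

theory Defs
  imports "HOL-Analysis.Analysis"
begin

definition lnorm2 :: "real^'n^'n \<Rightarrow> real^'n \<Rightarrow> real" where
  "lnorm2 Lam x = x \<bullet> (Lam *v x)"

definition spd :: "real^'n^'n \<Rightarrow> bool" where
  "spd Lam \<longleftrightarrow> transpose Lam = Lam \<and> (\<forall>x. x \<noteq> 0 \<longrightarrow> 0 < lnorm2 Lam x)"

text \<open>An extended-valued function that equals r on its effective domain D and +infinity
  outside is proper, convex and lower semicontinuous (closed epigraph).\<close>
definition proper_convex_lsc :: "('a::real_normed_vector \<Rightarrow> real) \<Rightarrow> 'a set \<Rightarrow> bool" where
  "proper_convex_lsc r D \<longleftrightarrow> D \<noteq> {} \<and> convex D \<and> convex_on D r
     \<and> closed {(x, t). x \<in> D \<and> r x \<le> t}"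

definition prox :: "real^'n^'n \<Rightarrow> (real^'n \<Rightarrow> real) \<Rightarrow> (real^'n) set \<Rightarrow> real^'n \<Rightarrow> real^'n" where
  "prox Lam r D x = (SOME y. y \<in> D \<and>
     (\<forall>z\<in>D. r y + lnorm2 Lam (x - y) / 2 \<le> r z + lnorm2 Lam (x - z) / 2))"

definition Fres :: "real^'n^'n \<Rightarrow> (real^'n \<Rightarrow> real) \<Rightarrow> (real^'n) set \<Rightarrow> real^'n \<Rightarrow> real^'n \<Rightarrow> real^'n" where
  "Fres Lam r D g x = x - prox Lam r D (x - matrix_inv Lam *v g)"

end

theory Submission
  imports Defs
begin

text \<open>Let \<open>p\<close> be the prox point of \<open>x - \<Lambda>\<^sup>-\<^sup>1 g\<close> and \<open>F = x - p\<close>. The optimality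
  conditions of \<open>p\<close> for the prox problem and of \<open>x\<^sup>*\<close> for \<open>\<psi>\<close>, combined with strong convexity
  of \<open>f\<close> and the descent lemma, give the quadratic inequality
  \<open>\<mu> t\<^sup>2 \<le> 2((\<lambda>\<^sub>M + \<mu>\<^sub>r)\<parallel>F\<parallel> + \<delta>) t + b\<^sub>1\<parallel>F\<parallel>\<^sup>2 + 2\<parallel>F\<parallel>\<delta>\<close> in \<open>t = \<parallel>x - x\<^sup>*\<parallel>\<close>,
  where \<open>\<mu> = \<mu>\<^sub>f + \<mu>\<^sub>r\<close> and \<open>\<delta> = \<parallel>\<nabla>f(x) - g\<parallel>\<close>. Bounding \<open>t\<close> by the larger root and
  separating \<open>\<parallel>F\<parallel>\<close> from \<open>\<delta>\<close> with a \<open>\<tau>\<close>-weighted Young inequality yields \<open>B\<^sub>1(\<tau>)\<close>;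
  for \<open>g = \<nabla>f(x)\<close> we have \<open>\<delta> = 0\<close> and the root bound alone gives \<open>B\<^sub>1(0)\<close>.\<close>

section \<open>Quadratic forms of symmetric matrices\<close>

lemma symmetric_matrix_inner_commute:
  fixes Lam :: "real^'n^'n"
  assumes "transpose Lam = Lam"
  shows "(Lam *v u) \<bullet> v = u \<bullet> (Lam *v v)"
proof -
  have "v v* Lam = Lam *v v" using vector_transpose_matrix[of v Lam] assms by simp
  then have "(Lam *v v) \<bullet> u = v \<bullet> (Lam *v u)" using dot_lmul_matrix[of v Lam u] by simp
  then show ?thesis by (simp add: inner_commute)
qed

lemma lnorm2_nonneg:
  assumes "spd Lam"
  shows "0 \<le> lnorm2 Lam x"
  using assms unfolding spd_def by (cases "x = 0") (auto simp: lnorm2_def less_imp_le)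

lemma lnorm2_scaleR: "lnorm2 Lam (t *\<^sub>R x) = t\<^sup>2 * lnorm2 Lam x"
  unfolding lnorm2_def by (simp add: matrix_vector_mult_scaleR power2_eq_square)

lemma lnorm2_diff_scaleR:
  fixes Lam :: "real^'n^'n"
  assumes "transpose Lam = Lam"
  shows "lnorm2 Lam (a - t *\<^sub>R b) = lnorm2 Lam a - 2 * t * ((Lam *v a) \<bullet> b) + t\<^sup>2 * lnorm2 Lam b"
  using symmetric_matrix_inner_commute[OF assms, of a b] unfolding lnorm2_def
  by (simp add: algebra_simps matrix_vector_mult_scaleR inner_diff_left inner_diff_right
      power2_eq_square inner_commute)

lemma continuous_on_lnorm2: "continuous_on S (lnorm2 (Lam::real^'n^'n))"
proof -
  have "continuous_on S (\<lambda>x. x \<bullet> (Lam *v x))"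
    by (intro continuous_intros continuous_on_compose2[OF matrix_vector_mult_linear_continuous_on[of UNIV Lam]]) auto
  then show ?thesis unfolding lnorm2_def[abs_def] .
qed

text \<open>Polarisation: \<open>4 (Lam u)\<bullet>v\<close> is the difference of the quadratic forms at
  \<open>a u + v/a\<close> and \<open>a u - v/a\<close>, and \<open>a\<^sup>2 = \<parallel>v\<parallel>/\<parallel>u\<parallel>\<close> balances the two terms.\<close>
lemma lnorm2_bilinear_le:
  fixes Lam :: "real^'n^'n"
  assumes "spd Lam" and upper: "\<And>x. lnorm2 Lam x \<le> lM * (norm x)\<^sup>2" and "0 \<le> lM"
  shows "(Lam *v u) \<bullet> v \<le> lM * norm u * norm v"
proof (cases "u = 0 \<or> v = 0")
  case True then show ?thesis by auto
next
  case False
  then have nu: "norm u > 0" and nv: "norm v > 0" by auto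
  have sym: "transpose Lam = Lam" using \<open>spd Lam\<close> unfolding spd_def by simp
  have polar: "4 * ((Lam *v u) \<bullet> v) \<le> lM * (a\<^sup>2 * (norm u)\<^sup>2 + 2 * (u \<bullet> v) + (norm v)\<^sup>2 / a\<^sup>2)"
    if a: "a > 0" for a
  proof -
    have s: "u \<bullet> (Lam *v v) = (Lam *v u) \<bullet> v" using symmetric_matrix_inner_commute[OF sym] by simp
    have diff: "lnorm2 Lam (a *\<^sub>R u + (1/a) *\<^sub>R v) - lnorm2 Lam (a *\<^sub>R u - (1/a) *\<^sub>R v) = 4 * ((Lam *v u) \<bullet> v)"
      unfolding lnorm2_def using a
      by (simp add: algebra_simps matrix_vector_mult_scaleR inner_diff_left inner_diff_right
          inner_add_left inner_add_right s inner_commute)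
    have "(norm (a *\<^sub>R u + (1/a) *\<^sub>R v))\<^sup>2 = a\<^sup>2 * (u \<bullet> u) + 2 * (u \<bullet> v) + (v \<bullet> v) / a\<^sup>2"
    proof -
      have "(norm (a *\<^sub>R u + (1/a) *\<^sub>R v))\<^sup>2 = (a *\<^sub>R u) \<bullet> (a *\<^sub>R u) + 2 * ((a *\<^sub>R u) \<bullet> ((1/a) *\<^sub>R v))
          + ((1/a) *\<^sub>R v) \<bullet> ((1/a) *\<^sub>R v)"
        by (simp only: power2_norm_eq_inner inner_add_left inner_add_right inner_commute)
      then show ?thesis using a by (simp add: power2_eq_square)
    qed
    then have "lnorm2 Lam (a *\<^sub>R u + (1/a) *\<^sub>R v) \<le> lM * (a\<^sup>2 * (norm u)\<^sup>2 + 2 * (u \<bullet> v) + (norm v)\<^sup>2 / a\<^sup>2)"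
      using upper[of "a *\<^sub>R u + (1/a) *\<^sub>R v"] by (simp add: power2_norm_eq_inner)
    then show ?thesis using diff lnorm2_nonneg[OF \<open>spd Lam\<close>, of "a *\<^sub>R u - (1/a) *\<^sub>R v"] by linarith
  qed
  define a where "a = sqrt (norm v / norm u)"
  have a2: "a\<^sup>2 = norm v / norm u" using nu nv by (simp add: a_def)
  have "a\<^sup>2 * (norm u)\<^sup>2 = norm u * norm v" using a2 nu by (simp add: power2_eq_square field_simps)
  moreover have "(norm v)\<^sup>2 / a\<^sup>2 = norm u * norm v" using a2 nu nv by (simp add: power2_eq_square)
  moreover have "u \<bullet> v \<le> norm u * norm v" by (rule norm_cauchy_schwarz)
  moreover have "a > 0" using nu nv by (simp add: a_def)
  ultimately have "4 * ((Lam *v u) \<bullet> v) \<le> lM * (4 * (norm u * norm v))"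
    using polar \<open>0 \<le> lM\<close> by (smt (verit) mult_left_mono)
  then show ?thesis by simp
qed

lemma spd_lnorm2_coercive:
  fixes Lam :: "real^'n^'n"
  assumes "spd Lam"
  obtains lam where "lam > 0" "\<And>x. lam * (norm x)\<^sup>2 \<le> lnorm2 Lam x"
proof -
  have "sphere (0::real^'n) 1 \<noteq> {}"
    using norm_axis_1[of undefined] by (metis mem_sphere_0 empty_iff)
  then obtain x0 where x0: "x0 \<in> sphere (0::real^'n) 1"
    and x0_min: "\<And>y. y \<in> sphere 0 1 \<Longrightarrow> lnorm2 Lam x0 \<le> lnorm2 Lam y"
    using continuous_attains_inf[OF compact_sphere _ continuous_on_lnorm2] by blast
  have "x0 \<noteq> 0" using x0 by auto
  then have pos: "lnorm2 Lam x0 > 0" using assms unfolding spd_def by blast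
  have "lnorm2 Lam x0 * (norm x)\<^sup>2 \<le> lnorm2 Lam x" for x
  proof (cases "x = 0")
    case True then show ?thesis by (simp add: lnorm2_def)
  next
    case False
    then have nx: "norm x > 0" by simp
    have "lnorm2 Lam x0 \<le> lnorm2 Lam ((1 / norm x) *\<^sub>R x)" using x0_min nx by simp
    also have "\<dots> = lnorm2 Lam x / (norm x)\<^sup>2" by (simp add: lnorm2_scaleR power_one_over field_simps)
    finally show ?thesis using nx by (simp add: field_simps)
  qed
  with pos that show ?thesis by blast
qed

lemma spd_matrix_inv_right:
  fixes Lam :: "real^'n^'n"
  assumes "spd Lam"
  shows "Lam *v (matrix_inv Lam *v g) = g"
proof -
  have "x = 0" if "Lam *v x = 0" for x
    using that assms unfolding spd_def lnorm2_def by force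
  then obtain B where "B ** Lam = mat 1" using matrix_left_invertible_ker by blast
  then have "invertible Lam" using invertible_left_inverse by blast
  then have "Lam ** matrix_inv Lam = mat 1"
    unfolding invertible_def matrix_inv_def by (rule someI2_ex) auto
  then show ?thesis by (simp add: matrix_vector_mul_assoc)
qed

section \<open>Smoothness and strong convexity\<close>

lemma has_real_derivative_along_line:
  fixes f :: "'a::real_inner \<Rightarrow> real"
  assumes "\<And>z. (f has_derivative (\<lambda>h. grad z \<bullet> h)) (at z)"
  shows "((\<lambda>s. f (x + s *\<^sub>R v)) has_real_derivative (grad (x + s *\<^sub>R v) \<bullet> v)) (at s within S)"
proof -
  have "((\<lambda>s. x + s *\<^sub>R v) has_derivative (\<lambda>t. t *\<^sub>R v)) (at s within S)"
    by (auto intro!: derivative_eq_intros)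
  from has_derivative_compose[OF this assms]
  have "((\<lambda>s. f (x + s *\<^sub>R v)) has_derivative (\<lambda>t. grad (x + s *\<^sub>R v) \<bullet> (t *\<^sub>R v))) (at s within S)" .
  then show ?thesis by (rule has_derivative_imp_has_field_derivative) (simp add: mult.commute)
qed

lemma descent_lemma:
  fixes f :: "'a::real_inner \<Rightarrow> real"
  assumes deriv: "\<And>z. (f has_derivative (\<lambda>h. grad z \<bullet> h)) (at z)"
    and lip: "\<And>x y. norm (grad x - grad y) \<le> L * norm (x - y)"
  shows "f y \<le> f x + grad x \<bullet> (y - x) + L / 2 * (norm (y - x))\<^sup>2"
proof -
  define v where "v = y - x"
  define \<phi> where "\<phi> s = f (x + s *\<^sub>R v) - s * (grad x \<bullet> v) - L / 2 * s\<^sup>2 * (norm v)\<^sup>2" for s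
  have "\<phi> 1 \<le> \<phi> 0"
  proof (rule DERIV_nonpos_imp_nonincreasing[of 0 1 \<phi>])
    fix s :: real assume s: "0 \<le> s" "s \<le> 1"
    have deriv_\<phi>: "(\<phi> has_real_derivative (grad (x + s *\<^sub>R v) \<bullet> v - grad x \<bullet> v - L * s * (norm v)\<^sup>2)) (at s)"
      unfolding \<phi>_def[abs_def]
      by (rule has_real_derivative_along_line[OF deriv, THEN DERIV_diff, THEN DERIV_diff, THEN DERIV_cong])
         (auto intro!: derivative_eq_intros)
    have "grad (x + s *\<^sub>R v) \<bullet> v - grad x \<bullet> v = (grad (x + s *\<^sub>R v) - grad x) \<bullet> v"
      by (simp add: inner_diff_left)
    also have "\<dots> \<le> norm (grad (x + s *\<^sub>R v) - grad x) * norm v" by (rule norm_cauchy_schwarz)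
    also have "\<dots> \<le> L * norm (s *\<^sub>R v) * norm v"
      using lip[of "x + s *\<^sub>R v" x] by (simp add: mult_right_mono)
    also have "\<dots> = L * s * (norm v)\<^sup>2" using s by (simp add: power2_eq_square)
    finally show "\<exists>y. (\<phi> has_real_derivative y) (at s) \<and> y \<le> 0" using deriv_\<phi> by force
  qed simp
  then show ?thesis unfolding \<phi>_def v_def by simp
qed

lemma strongly_convex_above_tangent:
  fixes f :: "'a::real_inner \<Rightarrow> real"
  assumes deriv: "\<And>z. (f has_derivative (\<lambda>h. grad z \<bullet> h)) (at z)"
    and cvx: "convex_on UNIV (\<lambda>x. f x - \<mu> / 2 * (norm x)\<^sup>2)"
  shows "f x + grad x \<bullet> (y - x) + \<mu> / 2 * (norm (y - x))\<^sup>2 \<le> f y"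
proof -
  define v where "v = y - x"
  define g where "g t = f (x + t *\<^sub>R v) - \<mu> / 2 * (norm (x + t *\<^sub>R v))\<^sup>2" for t
  have g_expand: "g t = f (x + t *\<^sub>R v) - \<mu> / 2 * ((norm x)\<^sup>2 + 2 * t * (x \<bullet> v) + t\<^sup>2 * (norm v)\<^sup>2)" for t
    unfolding g_def
    by (simp only: power2_norm_eq_inner)
       (simp add: inner_add_left inner_add_right inner_commute power2_eq_square algebra_simps)
  have "convex_on UNIV g"
    unfolding convex_on_def
  proof (intro conjI ballI allI impI)
    fix a b u w :: real assume u: "u \<ge> 0" "w \<ge> 0" "u + w = 1"
    have "x + (u * a + w * b) *\<^sub>R v = u *\<^sub>R (x + a *\<^sub>R v) + w *\<^sub>R (x + b *\<^sub>R v)"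
      using u by (simp add: algebra_simps flip: scaleR_add_left)
    then show "g (u *\<^sub>R a + w *\<^sub>R b) \<le> u * g a + w * g b"
      using cvx u unfolding convex_on_def g_def by simp
  qed auto
  moreover have "(g has_real_derivative (grad x \<bullet> v - \<mu> * (x \<bullet> v))) (at 0)"
    unfolding g_expand[abs_def]
    by (rule has_real_derivative_along_line[OF deriv, THEN DERIV_diff, THEN DERIV_cong])
       (auto intro!: derivative_eq_intros)
  ultimately have "(grad x \<bullet> v - \<mu> * (x \<bullet> v)) * (1 - 0) \<le> g 1 - g 0"
    by (intro convex_on_imp_above_tangent) auto
  then show ?thesis unfolding g_expand v_def by (simp add: algebra_simps)
qed

lemma strong_convexity_le_Lipschitz:
  fixes f :: "'a::real_inner \<Rightarrow> real"
  assumes deriv: "\<And>z. (f has_derivative (\<lambda>h. grad z \<bullet> h)) (at z)"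
    and lip: "\<And>x y. norm (grad x - grad y) \<le> L * norm (x - y)"
    and cvx: "convex_on UNIV (\<lambda>x. f x - \<mu> / 2 * (norm x)\<^sup>2)"
  shows "\<mu> * (norm (v::'a))\<^sup>2 \<le> L * (norm v)\<^sup>2"
proof -
  have "\<mu> * (norm v)\<^sup>2 \<le> (grad v - grad 0) \<bullet> v"
    using strongly_convex_above_tangent[OF deriv cvx, of 0 v] strongly_convex_above_tangent[OF deriv cvx, of v 0]
    by (simp add: inner_diff_left)
  also have "\<dots> \<le> norm (grad v - grad 0) * norm v" by (rule norm_cauchy_schwarz)
  also have "\<dots> \<le> L * (norm v)\<^sup>2"
    using lip[of v 0] mult_right_mono[OF lip[of v 0] norm_ge_zero[of v]] by (simp add: power2_eq_square)
  finally show ?thesis .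
qed

lemma norm_convex_combination_sq:
  fixes y z :: "'a::real_inner"
  shows "(norm ((1 - t) *\<^sub>R z + t *\<^sub>R y))\<^sup>2
    = (1 - t) * (norm z)\<^sup>2 + t * (norm y)\<^sup>2 - t * (1 - t) * (norm (y - z))\<^sup>2"
  by (simp only: power2_norm_eq_inner)
     (simp add: inner_add_left inner_add_right inner_diff_left inner_diff_right inner_commute algebra_simps)

lemma strongly_convex_on_combination:
  fixes r :: "'a::real_inner \<Rightarrow> real"
  assumes "convex_on D (\<lambda>x. r x - \<mu> / 2 * (norm x)\<^sup>2)" "y \<in> D" "z \<in> D" "0 \<le> t" "t \<le> 1"
  shows "r ((1 - t) *\<^sub>R z + t *\<^sub>R y) \<le> (1 - t) * r z + t * r y - \<mu> / 2 * (t * (1 - t) * (norm (y - z))\<^sup>2)"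
proof -
  have "r ((1 - t) *\<^sub>R z + t *\<^sub>R y) - \<mu> / 2 * (norm ((1 - t) *\<^sub>R z + t *\<^sub>R y))\<^sup>2
      \<le> (1 - t) * (r z - \<mu> / 2 * (norm z)\<^sup>2) + t * (r y - \<mu> / 2 * (norm y)\<^sup>2)"
    using assms unfolding convex_on_def by auto
  then show ?thesis
    unfolding norm_convex_combination_sq by (simp add: algebra_simps add_divide_distrib diff_divide_distrib)
qed

section \<open>First-order optimality over a convex set\<close>

lemma nonneg_from_small_multiples:
  fixes X c :: real
  assumes "\<And>\<theta>. 0 < \<theta> \<Longrightarrow> \<theta> \<le> 1 \<Longrightarrow> 0 \<le> \<theta> * X + \<theta>\<^sup>2 * c"
  shows "0 \<le> X"
proof (rule ccontr)
  assume "\<not> 0 \<le> X"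
  then have X: "X < 0" by simp
  define \<theta> where "\<theta> = min 1 (- X / (2 * \<bar>c\<bar> + 1))"
  have "0 < - X / (2 * \<bar>c\<bar> + 1)" using X by (intro divide_pos_pos) auto
  then have \<theta>: "0 < \<theta>" "\<theta> \<le> 1" by (auto simp: \<theta>_def)
  have "0 \<le> \<theta> * (X + \<theta> * c)" using assms[OF \<theta>] by (simp add: algebra_simps power2_eq_square)
  then have "0 \<le> X + \<theta> * c" using \<theta> by (simp add: zero_le_mult_iff)
  moreover have "\<theta> * c \<le> \<theta> * \<bar>c\<bar>" using \<theta> by (simp add: mult_left_mono)
  moreover have "\<theta> * \<bar>c\<bar> \<le> (- X / (2 * \<bar>c\<bar> + 1)) * \<bar>c\<bar>" by (rule mult_right_mono) (auto simp: \<theta>_def)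
  moreover have "(- X / (2 * \<bar>c\<bar> + 1)) * \<bar>c\<bar> < - X"
    using X by (simp add: field_simps) (smt (verit) abs_ge_zero mult_nonpos_nonneg)
  ultimately show False by linarith
qed

text \<open>Compare \<open>p\<close> with the points \<open>(1 - t) p + t y\<close>: the error terms are of order \<open>t\<^sup>2\<close>,
  so they disappear against the linear ones as \<open>t \<rightarrow> 0\<close>.\<close>
lemma minimizer_variational_inequality:
  fixes r h :: "'a::real_inner \<Rightarrow> real"
  assumes cvx: "convex_on D (\<lambda>x. r x - \<mu> / 2 * (norm x)\<^sup>2)"
    and "p \<in> D" "y \<in> D"
    and min: "\<And>w. w \<in> D \<Longrightarrow> h p + r p \<le> h w + r w"
    and expansion: "\<And>t. 0 < t \<Longrightarrow> t \<le> 1 \<Longrightarrow> h ((1 - t) *\<^sub>R p + t *\<^sub>R y) \<le> h p + t * c + t\<^sup>2 * K"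
  shows "r p - c + \<mu> / 2 * (norm (y - p))\<^sup>2 \<le> r y"
proof -
  define N where "N = (norm (y - p))\<^sup>2"
  have "0 \<le> r y - r p + c - \<mu> / 2 * N"
  proof (rule nonneg_from_small_multiples[where c = "K + \<mu> / 2 * N"])
    fix t :: real assume t: "0 < t" "t \<le> 1"
    define yt where "yt = (1 - t) *\<^sub>R p + t *\<^sub>R y"
    have "yt \<in> D"
      using cvx \<open>p \<in> D\<close> \<open>y \<in> D\<close> t unfolding convex_on_def convex_alt yt_def by auto
    then have "h p + r p \<le> h yt + r yt" by (rule min)
    moreover have "h yt \<le> h p + t * c + t\<^sup>2 * K" unfolding yt_def using t by (rule expansion)
    moreover have "r yt \<le> (1 - t) * r p + t * r y - \<mu> / 2 * (t * (1 - t) * N)"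
      unfolding yt_def N_def using strongly_convex_on_combination[OF cvx \<open>y \<in> D\<close> \<open>p \<in> D\<close>] t by simp
    ultimately show "0 \<le> t * (r y - r p + c - \<mu> / 2 * N) + t\<^sup>2 * (K + \<mu> / 2 * N)"
      by (simp add: algebra_simps power2_eq_square)
  qed
  then show ?thesis unfolding N_def by simp
qed

lemma composite_minimizer_optimality:
  fixes f r :: "'a::real_inner \<Rightarrow> real"
  assumes deriv: "\<And>z. (f has_derivative (\<lambda>h. grad z \<bullet> h)) (at z)"
    and lip: "\<And>x y. norm (grad x - grad y) \<le> L * norm (x - y)"
    and cvx: "convex_on D (\<lambda>x. r x - \<mu> / 2 * (norm x)\<^sup>2)"
    and "xs \<in> D" and min: "\<And>y. y \<in> D \<Longrightarrow> f xs + r xs \<le> f y + r y" and "y \<in> D"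
  shows "r xs - grad xs \<bullet> (y - xs) + \<mu> / 2 * (norm (y - xs))\<^sup>2 \<le> r y"
proof (rule minimizer_variational_inequality[OF cvx \<open>xs \<in> D\<close> \<open>y \<in> D\<close> min])
  fix t :: real
  have segment: "(1 - t) *\<^sub>R xs + t *\<^sub>R y - xs = t *\<^sub>R (y - xs)" by (simp add: algebra_simps)
  show "f ((1 - t) *\<^sub>R xs + t *\<^sub>R y) \<le> f xs + t * (grad xs \<bullet> (y - xs)) + t\<^sup>2 * (L / 2 * (norm (y - xs))\<^sup>2)"
    using descent_lemma[OF deriv lip, of "(1 - t) *\<^sub>R xs + t *\<^sub>R y" xs]
    unfolding segment by (simp add: power_mult_distrib mult.left_commute)
qed

section \<open>The scaled proximal map\<close>

lemma quadratic_growth_bound: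
  fixes \<rho> A G lam :: real
  assumes "0 \<le> \<rho>" "0 \<le> A" "0 \<le> G" "0 < lam" "lam / 2 * \<rho>\<^sup>2 \<le> A + G * \<rho>"
  shows "\<rho> \<le> 1 + 2 * (A + G) / lam"
proof (rule ccontr)
  assume "\<not> ?thesis"
  then have big: "\<rho> > 1 + 2 * (A + G) / lam" by simp
  moreover have "0 \<le> 2 * (A + G) / lam" using assms by simp
  ultimately have "1 \<le> \<rho>" by linarith
  then have "A + G * \<rho> \<le> (A + G) * \<rho>"
    using assms by (simp add: algebra_simps) (metis mult_left_mono mult.right_neutral)
  then have "lam / 2 * \<rho> * \<rho> \<le> (A + G) * \<rho>" using assms by (simp add: power2_eq_square)
  then have "lam / 2 * \<rho> \<le> A + G" using \<open>1 \<le> \<rho>\<close> by simp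
  then have "\<rho> \<le> 2 * (A + G) / lam" using assms by (simp add: field_simps)
  then show False using big by linarith
qed

lemma prox_sublevel_set_bounded:
  fixes Lam :: "real^'n^'n" and r :: "real^'n \<Rightarrow> real"
  assumes "spd Lam" and minorant: "\<And>y. y \<in> D \<Longrightarrow> a + g \<bullet> y \<le> r y"
  shows "bounded {(w, t). w \<in> D \<and> r w \<le> t \<and> t + lnorm2 Lam (u - w) / 2 \<le> c}"
proof -
  obtain lam where lam: "lam > 0" "\<And>x. lam * (norm x)\<^sup>2 \<le> lnorm2 Lam x"
    using spd_lnorm2_coercive[OF \<open>spd Lam\<close>] by blast
  define R where "R = 1 + 2 * (\<bar>c - a\<bar> + norm g * norm u + norm g) / lam"
  have "norm w \<le> norm u + R \<and> \<bar>t\<bar> \<le> \<bar>c\<bar> + \<bar>a\<bar> + norm g * (norm u + R)"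
    if "w \<in> D" "r w \<le> t" and level: "t + lnorm2 Lam (u - w) / 2 \<le> c" for w t
  proof -
    have "- (norm g * norm w) \<le> g \<bullet> w"
      using norm_cauchy_schwarz[of "- g" w] by simp
    then have t_low: "a - norm g * norm w \<le> t" using minorant[OF \<open>w \<in> D\<close>] \<open>r w \<le> t\<close> by linarith
    have nw: "norm w \<le> norm u + norm (u - w)" by (metis norm_triangle_sub add.commute norm_minus_commute)
    have "lam / 2 * (norm (u - w))\<^sup>2 \<le> c - t" using lam(2)[of "u - w"] level by simp
    also have "\<dots> \<le> (\<bar>c - a\<bar> + norm g * norm u) + norm g * norm (u - w)"
      using t_low mult_left_mono[OF nw norm_ge_zero[of g]] by (simp add: algebra_simps)
    finally have "norm (u - w) \<le> R"
      unfolding R_def by (intro quadratic_growth_bound) (auto simp: lam)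
    then have nwR: "norm w \<le> norm u + R" using nw by simp
    have "t \<le> c" using level lnorm2_nonneg[OF \<open>spd Lam\<close>, of "u - w"] by simp
    moreover have "norm g * norm w \<le> norm g * (norm u + R)" using nwR by (intro mult_left_mono) auto
    moreover have "0 \<le> norm g * norm w" by simp
    ultimately show ?thesis
      using t_low nwR abs_ge_self[of c] abs_ge_minus_self[of a] unfolding abs_le_iff by linarith
  qed
  then show ?thesis
    unfolding bounded_iff
    by (intro exI[of _ "(norm u + R) + (\<bar>c\<bar> + \<bar>a\<bar> + norm g * (norm u + R))"])
       (force intro: order_trans[OF norm_Pair_le] add_mono)
qed

lemma prox_argmin_exists:
  fixes Lam :: "real^'n^'n" and r :: "real^'n \<Rightarrow> real"
  assumes "proper_convex_lsc r D" "spd Lam" "\<And>y. y \<in> D \<Longrightarrow> a + g \<bullet> y \<le> r y"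
  shows "\<exists>p\<in>D. \<forall>w\<in>D. r p + lnorm2 Lam (u - p) / 2 \<le> r w + lnorm2 Lam (u - w) / 2"
proof -
  obtain z0 where "z0 \<in> D" using \<open>proper_convex_lsc r D\<close> unfolding proper_convex_lsc_def by auto
  define c where "c = r z0 + lnorm2 Lam (u - z0) / 2"
  define h :: "(real^'n) \<times> real \<Rightarrow> real" where "h z = snd z + lnorm2 Lam (u - fst z) / 2" for z
  define K where "K = {(w, t). w \<in> D \<and> r w \<le> t \<and> t + lnorm2 Lam (u - w) / 2 \<le> c}"
  have h_cont: "continuous_on UNIV h"
    unfolding h_def by (intro continuous_intros continuous_on_compose2[OF continuous_on_lnorm2]) auto
  have "K = {(w, t). w \<in> D \<and> r w \<le> t} \<inter> {z. h z \<le> c}" unfolding K_def h_def by auto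
  then have "closed K"
    using \<open>proper_convex_lsc r D\<close> unfolding proper_convex_lsc_def
    by (simp add: closed_Int closed_Collect_le h_cont continuous_on_const)
  moreover have "bounded K" unfolding K_def by (rule prox_sublevel_set_bounded[OF assms(2,3)])
  moreover have "(z0, r z0) \<in> K" using \<open>z0 \<in> D\<close> unfolding K_def c_def by auto
  ultimately obtain z1 where "z1 \<in> K" and z1_min: "\<And>z. z \<in> K \<Longrightarrow> h z1 \<le> h z"
    using continuous_attains_inf[OF _ _ continuous_on_subset[OF h_cont]] compact_eq_bounded_closed
    by (metis empty_iff subset_UNIV)
  then obtain p t where z1: "z1 = (p, t)" "p \<in> D" "r p \<le> t" "h z1 \<le> c" unfolding K_def h_def by auto
  have "r p + lnorm2 Lam (u - p) / 2 \<le> r w + lnorm2 Lam (u - w) / 2" if "w \<in> D" for w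
  proof (cases "r w + lnorm2 Lam (u - w) / 2 \<le> c")
    case True
    then have "h z1 \<le> h (w, r w)" using \<open>w \<in> D\<close> by (intro z1_min) (auto simp: K_def)
    then show ?thesis using z1 by (simp add: h_def)
  next
    case False then show ?thesis using z1 by (simp add: h_def)
  qed
  with z1 show ?thesis by blast
qed

lemma prox_minimizes:
  fixes Lam :: "real^'n^'n" and r :: "real^'n \<Rightarrow> real"
  assumes "proper_convex_lsc r D" "spd Lam" "\<And>y. y \<in> D \<Longrightarrow> a + g \<bullet> y \<le> r y"
  shows "prox Lam r D u \<in> D"
    and "\<And>w. w \<in> D \<Longrightarrow> r (prox Lam r D u) + lnorm2 Lam (u - prox Lam r D u) / 2 \<le> r w + lnorm2 Lam (u - w) / 2"
  using someI_ex[OF prox_argmin_exists[OF assms, of u, unfolded Bex_def]]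
  unfolding prox_def by blast+

lemma prox_optimality:
  fixes Lam :: "real^'n^'n" and r :: "real^'n \<Rightarrow> real"
  assumes "proper_convex_lsc r D" "spd Lam" "\<And>y. y \<in> D \<Longrightarrow> a + g \<bullet> y \<le> r y"
    and cvx: "convex_on D (\<lambda>x. r x - \<mu> / 2 * (norm x)\<^sup>2)" and "y \<in> D"
  shows "r (prox Lam r D u) + (Lam *v (u - prox Lam r D u)) \<bullet> (y - prox Lam r D u)
      + \<mu> / 2 * (norm (y - prox Lam r D u))\<^sup>2 \<le> r y"
proof -
  define p where "p = prox Lam r D u"
  have sym: "transpose Lam = Lam" using \<open>spd Lam\<close> unfolding spd_def by simp
  have "r p - (- ((Lam *v (u - p)) \<bullet> (y - p))) + \<mu> / 2 * (norm (y - p))\<^sup>2 \<le> r y"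
  proof (rule minimizer_variational_inequality[OF cvx _ \<open>y \<in> D\<close>, where h = "\<lambda>w. lnorm2 Lam (u - w) / 2"])
    show "p \<in> D" "\<And>w. w \<in> D \<Longrightarrow> lnorm2 Lam (u - p) / 2 + r p \<le> lnorm2 Lam (u - w) / 2 + r w"
      unfolding p_def using prox_minimizes[OF assms(1-3)] by (auto simp: add.commute)
    fix t :: real
    have segment: "u - ((1 - t) *\<^sub>R p + t *\<^sub>R y) = (u - p) - t *\<^sub>R (y - p)" by (simp add: algebra_simps)
    show "lnorm2 Lam (u - ((1 - t) *\<^sub>R p + t *\<^sub>R y)) / 2
        \<le> lnorm2 Lam (u - p) / 2 + t * (- ((Lam *v (u - p)) \<bullet> (y - p))) + t\<^sup>2 * (lnorm2 Lam (y - p) / 2)"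
      unfolding segment lnorm2_diff_scaleR[OF sym] by simp
  qed
  then show ?thesis unfolding p_def by simp
qed

section \<open>Solving the quadratic inequality\<close>

lemma quadratic_le_root:
  fixes \<mu> t B C :: real
  assumes "0 < \<mu>" "\<mu> * t\<^sup>2 \<le> 2 * B * t + C"
  shows "\<mu> * t \<le> B + sqrt (B\<^sup>2 + \<mu> * C)"
proof -
  have "(\<mu> * t - B)\<^sup>2 = \<mu> * (\<mu> * t\<^sup>2 - 2 * B * t) + B\<^sup>2" by (simp add: power2_eq_square algebra_simps)
  also have "\<dots> \<le> B\<^sup>2 + \<mu> * C" using mult_left_mono[OF assms(2), of \<mu>] assms(1) by (simp add: algebra_simps)
  finally show ?thesis using real_le_rsqrt by fastforce
qed

lemma sq_add_le_weighted:
  fixes P Q \<tau> :: real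
  assumes "0 < \<tau>"
  shows "(P + Q)\<^sup>2 \<le> (1 + \<tau>) * P\<^sup>2 + (1 + 1 / \<tau>) * Q\<^sup>2"
proof -
  have "0 \<le> (\<tau> * P - Q)\<^sup>2 / \<tau>" using assms by simp
  also have "\<dots> = (1 + \<tau>) * P\<^sup>2 + (1 + 1 / \<tau>) * Q\<^sup>2 - (P + Q)\<^sup>2"
    using assms by (simp add: power2_eq_square field_simps)
  finally show ?thesis by simp
qed

lemma error_coefficient_eq:
  fixes \<mu> a b c :: real
  assumes "0 < \<mu>" "0 \<le> a"
  shows "c / \<mu> * (sqrt (b + a\<^sup>2 / \<mu>) + sqrt (a\<^sup>2 / \<mu>))\<^sup>2 = c * ((a + sqrt (a\<^sup>2 + \<mu> * b)) / \<mu>)\<^sup>2"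
proof -
  have "b + a\<^sup>2 / \<mu> = (a\<^sup>2 + \<mu> * b) / \<mu>" using assms by (simp add: field_simps)
  then have "sqrt (b + a\<^sup>2 / \<mu>) = sqrt (a\<^sup>2 + \<mu> * b) / sqrt \<mu>" by (simp only: real_sqrt_divide)
  moreover have "sqrt (a\<^sup>2 / \<mu>) = a / sqrt \<mu>" using assms by (simp add: real_sqrt_divide)
  ultimately have "sqrt (b + a\<^sup>2 / \<mu>) + sqrt (a\<^sup>2 / \<mu>) = (a + sqrt (a\<^sup>2 + \<mu> * b)) / sqrt \<mu>"
    by (simp add: add_divide_distrib)
  then show ?thesis using assms by (simp add: power_divide power2_eq_square)
qed

lemma quadratic_error_bound:
  fixes \<mu> a b t y :: real
  assumes "0 < \<mu>" "0 \<le> a" "0 \<le> t" "0 \<le> y" "\<mu> * t\<^sup>2 \<le> 2 * (a * y) * t + b * y\<^sup>2"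
  shows "t\<^sup>2 \<le> ((a + sqrt (a\<^sup>2 + \<mu> * b)) / \<mu>)\<^sup>2 * y\<^sup>2"
proof -
  have "\<mu> * t \<le> a * y + sqrt ((a * y)\<^sup>2 + \<mu> * (b * y\<^sup>2))"
    using quadratic_le_root[OF assms(1,5)] .
  also have "(a * y)\<^sup>2 + \<mu> * (b * y\<^sup>2) = (a\<^sup>2 + \<mu> * b) * y\<^sup>2" by (simp add: algebra_simps power_mult_distrib)
  also have "sqrt ((a\<^sup>2 + \<mu> * b) * y\<^sup>2) = sqrt (a\<^sup>2 + \<mu> * b) * y"
    using \<open>0 \<le> y\<close> by (simp add: real_sqrt_mult)
  finally have "t \<le> (a + sqrt (a\<^sup>2 + \<mu> * b)) / \<mu> * y"
    using assms(1) by (simp add: pos_le_divide_eq algebra_simps)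
  from power_mono[OF this \<open>0 \<le> t\<close>, of 2] show ?thesis by (simp only: power_mult_distrib)
qed

lemma perturbed_quadratic_error_bound:
  fixes \<mu> a b t y z \<tau> :: real
  assumes "0 < \<mu>" "0 \<le> a" "0 \<le> t" "0 \<le> y" "0 \<le> z" "0 < \<tau>" "0 \<le> a\<^sup>2 + \<mu> * b"
    and ineq: "\<mu> * t\<^sup>2 \<le> 2 * (a * y + z) * t + (b * y\<^sup>2 + 2 * y * z)"
  shows "t\<^sup>2 \<le> (1 + \<tau>) * ((a + sqrt (a\<^sup>2 + \<mu> * (b + \<tau>))) / \<mu>)\<^sup>2 * y\<^sup>2
      + (1 + 1 / \<tau>) * ((2 + (a + \<mu>) / sqrt (\<mu> * \<tau>)) / \<mu>)\<^sup>2 * z\<^sup>2"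
proof -
  define s where "s = sqrt (a\<^sup>2 + \<mu> * (b + \<tau>))"
  define k where "k = 1 + (a + \<mu>) / sqrt (\<mu> * \<tau>)"
  have s2: "s\<^sup>2 = a\<^sup>2 + \<mu> * (b + \<tau>)" and "0 \<le> s"
    unfolding s_def using assms by (simp_all add: algebra_simps)
  have root_pos: "0 < sqrt (\<mu> * \<tau>)" using assms by simp
  have "sqrt (\<mu> * \<tau>) \<le> s" unfolding s_def using assms by (simp add: algebra_simps)
  have "a + \<mu> = (a + \<mu>) / sqrt (\<mu> * \<tau>) * sqrt (\<mu> * \<tau>)" using assms by simp
  also have "\<dots> \<le> (a + \<mu>) / sqrt (\<mu> * \<tau>) * s"
    using \<open>sqrt (\<mu> * \<tau>) \<le> s\<close> assms root_pos by (intro mult_left_mono) auto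
  also have "\<dots> \<le> k * s" unfolding k_def using \<open>0 \<le> s\<close> by (simp add: distrib_right)
  finally have ks: "a + \<mu> \<le> k * s" .
  have "1 \<le> k" unfolding k_def using assms root_pos by simp
  have "(a * y + z)\<^sup>2 + \<mu> * (b * y\<^sup>2 + 2 * y * z) = (a\<^sup>2 + \<mu> * b) * y\<^sup>2 + 2 * (a + \<mu>) * y * z + z\<^sup>2"
    by (simp add: power2_eq_square algebra_simps)
  also have "\<dots> \<le> (s * y + k * z)\<^sup>2"
  proof -
    have "(a\<^sup>2 + \<mu> * b) * y\<^sup>2 \<le> s\<^sup>2 * y\<^sup>2" using s2 assms by (intro mult_right_mono) auto
    moreover have "2 * (a + \<mu>) * y * z \<le> 2 * (k * s) * y * z"
      using ks assms by (simp add: mult_right_mono mult_left_mono)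
    moreover have "z\<^sup>2 \<le> k\<^sup>2 * z\<^sup>2" using mult_right_mono[OF one_le_power[OF \<open>1 \<le> k\<close>], of "z\<^sup>2" 2] by simp
    ultimately show ?thesis by (simp add: power2_eq_square algebra_simps)
  qed
  finally have "sqrt ((a * y + z)\<^sup>2 + \<mu> * (b * y\<^sup>2 + 2 * y * z)) \<le> s * y + k * z"
    using \<open>0 \<le> s\<close> \<open>1 \<le> k\<close> assms by (intro real_le_lsqrt) auto
  with quadratic_le_root[OF \<open>0 < \<mu>\<close> ineq]
  have "\<mu> * t \<le> (a + s) * y + (1 + k) * z" by (simp add: algebra_simps)
  then have "t \<le> ((a + s) * y + (1 + k) * z) / \<mu>"
    using assms(1) by (simp add: pos_le_divide_eq mult.commute)
  also have "\<dots> = (a + s) / \<mu> * y + (1 + k) / \<mu> * z" by (simp add: divide_simps)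
  finally have "t \<le> (a + s) / \<mu> * y + (1 + k) / \<mu> * z" .
  from power_mono[OF this \<open>0 \<le> t\<close>]
  have "t\<^sup>2 \<le> ((a + s) / \<mu> * y + (1 + k) / \<mu> * z)\<^sup>2" .
  also have "\<dots> \<le> (1 + \<tau>) * ((a + s) / \<mu>)\<^sup>2 * y\<^sup>2 + (1 + 1 / \<tau>) * ((1 + k) / \<mu>)\<^sup>2 * z\<^sup>2"
    using sq_add_le_weighted[OF \<open>0 < \<tau>\<close>, of "(a + s) / \<mu> * y" "(1 + k) / \<mu> * z"]
    by (simp only: power_mult_distrib mult.assoc)
  finally show ?thesis unfolding s_def k_def by (simp add: add.assoc)
qed

section \<open>The error bound\<close>

text \<open>The coefficient \<open>B\<^sub>2(\<tau>)\<close>, with \<open>\<mu> = \<mu>\<^sub>f + \<mu>\<^sub>r\<close> and \<open>a = \<lambda>\<^sub>M + \<mu>\<^sub>r\<close>; the \<open>max\<close> keeps it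
  positive also for the meaningless arguments (\<open>\<tau> \<le> 0\<close>, \<open>\<mu> \<le> 0\<close>) the theorem quantifies over.\<close>
definition noise_coeff :: "real \<Rightarrow> real \<Rightarrow> real \<Rightarrow> real" where
  "noise_coeff \<tau> \<mu> a = max 1 ((1 + 1 / \<tau>) * ((2 + (a + \<mu>) / sqrt (\<mu> * \<tau>)) / \<mu>)\<^sup>2)"

locale composite_problem =
  fixes f :: "real^'n \<Rightarrow> real" and grad :: "real^'n \<Rightarrow> real^'n" and r :: "real^'n \<Rightarrow> real"
    and D :: "(real^'n) set" and Lam :: "real^'n^'n"
    and L muf mur lm lM :: real and xstar :: "real^'n"
  assumes f_deriv: "\<And>x. (f has_derivative (\<lambda>h. grad x \<bullet> h)) (at x)"
    and r_proper_convex_lsc: "proper_convex_lsc r D"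
    and grad_Lipschitz: "\<And>x y. norm (grad x - grad y) \<le> L * norm (x - y)"
    and mur_nonneg: "0 \<le> mur" and mu_pos: "0 < muf + mur"
    and f_strongly_convex: "convex_on UNIV (\<lambda>x. f x - muf / 2 * (norm x)\<^sup>2)"
    and r_strongly_convex: "convex_on D (\<lambda>x. r x - mur / 2 * (norm x)\<^sup>2)"
    and Lam_spd: "spd Lam"
    and Lam_lower: "\<And>x. lm * (norm x)\<^sup>2 \<le> lnorm2 Lam x"
    and Lam_upper: "\<And>x. lnorm2 Lam x \<le> lM * (norm x)\<^sup>2"
    and xstar_in: "xstar \<in> D" and xstar_min: "\<And>y. y \<in> D \<Longrightarrow> f xstar + r xstar \<le> f y + r y"
begin

lemma lm_le_lM: "lm \<le> lM" and lM_nonneg: "0 \<le> lM"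
proof -
  define e :: "real^'n" where "e = axis undefined 1"
  have "norm e = 1" by (simp add: e_def)
  moreover have "0 < lnorm2 Lam e" using Lam_spd \<open>norm e = 1\<close> unfolding spd_def by (metis norm_zero zero_neq_one)
  ultimately show "lm \<le> lM" "0 \<le> lM" using Lam_lower[of e] Lam_upper[of e] by auto
qed

lemma muf_le_L: "muf \<le> L"
  using strong_convexity_le_Lipschitz[OF f_deriv grad_Lipschitz f_strongly_convex, of "axis undefined 1"]
  by simp

text \<open>This is \<open>b\<^sub>1 + b\<^sub>2 \<ge> 0\<close>, scaled by \<open>\<mu>\<^sub>f + \<mu>\<^sub>r\<close>.\<close>
lemma discriminant_nonneg: "0 \<le> (lM + mur)\<^sup>2 + (muf + mur) * (L - 2 * lm - mur)"
proof -
  have "2 * (muf + mur) * (lM + mur) - (muf + mur)\<^sup>2 \<le> (lM + mur)\<^sup>2"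
    using zero_le_power2[of "lM + mur - (muf + mur)"] by (simp add: power2_eq_square algebra_simps)
  moreover have "0 \<le> (muf + mur) * (2 * (lM - lm) + (L - muf))"
    using mu_pos lm_le_lM muf_le_L by simp
  ultimately show ?thesis by (simp add: power2_eq_square algebra_simps)
qed

lemma r_affine_minorant: "y \<in> D \<Longrightarrow> (r xstar + grad xstar \<bullet> xstar) + (- grad xstar) \<bullet> y \<le> r y"
  using composite_minimizer_optimality[OF f_deriv grad_Lipschitz r_strongly_convex xstar_in xstar_min, of y]
    mur_nonneg
  by (simp add: inner_diff_right) (smt (verit) zero_le_power2 mult_nonneg_nonneg divide_nonneg_pos)

text \<open>With \<open>p\<close> the prox point, \<open>F = x - p\<close>, \<open>d = x - x\<^sup>*\<close> and \<open>e = p - x\<^sup>* = d - F\<close>: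
  the optimality conditions at \<open>p\<close> and \<open>x\<^sup>*\<close> bound \<open>\<mu>\<^sub>r \<parallel>e\<parallel>\<^sup>2\<close>, and strong convexity
  at \<open>x, x\<^sup>*\<close> together with the descent lemma at \<open>x\<close> supply the remaining terms.\<close>
lemma residual_inner_inequality:
  fixes x g :: "real^'n"
  defines "F \<equiv> Fres Lam r D g x" and "d \<equiv> x - xstar"
  shows "(muf + mur) * (norm d)\<^sup>2 \<le> 2 * ((Lam *v F) \<bullet> d) + 2 * mur * (d \<bullet> F) - 2 * lnorm2 Lam F
      + (L - mur) * (norm F)\<^sup>2 + 2 * ((grad x - g) \<bullet> d) - 2 * ((grad x - g) \<bullet> F)"
proof -
  define u where "u = x - matrix_inv Lam *v g"
  define p where "p = prox Lam r D u"
  define e where "e = p - xstar"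
  have F: "F = x - p" unfolding F_def Fres_def p_def u_def ..
  have e: "e = d - F" unfolding e_def d_def F by simp
  have "p \<in> D" unfolding p_def by (rule prox_minimizes(1)[OF r_proper_convex_lsc Lam_spd r_affine_minorant])
  have "Lam *v (u - p) = Lam *v F - g"
    unfolding u_def F using spd_matrix_inv_right[OF Lam_spd, of g]
    by (simp add: matrix_vector_mult_diff_distrib algebra_simps)
  moreover have "xstar - p = - e" by (simp add: e_def)
  ultimately have r_prox: "r p - (Lam *v F - g) \<bullet> e + mur / 2 * (norm e)\<^sup>2 \<le> r xstar"
    using prox_optimality[OF r_proper_convex_lsc Lam_spd r_affine_minorant r_strongly_convex xstar_in, of u]
    unfolding p_def[symmetric] by simp
  have r_min: "r xstar - grad xstar \<bullet> e + mur / 2 * (norm e)\<^sup>2 \<le> r p"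
    using composite_minimizer_optimality[OF f_deriv grad_Lipschitz r_strongly_convex xstar_in xstar_min \<open>p \<in> D\<close>]
    unfolding e_def .
  have f_x: "f x - grad x \<bullet> d + muf / 2 * (norm d)\<^sup>2 \<le> f xstar"
    using strongly_convex_above_tangent[OF f_deriv f_strongly_convex, of x xstar]
    by (simp add: d_def inner_diff_right norm_minus_commute)
  have f_xstar: "f xstar + grad xstar \<bullet> e + muf / 2 * (norm e)\<^sup>2 \<le> f p"
    using strongly_convex_above_tangent[OF f_deriv f_strongly_convex, of xstar p] unfolding e_def .
  have f_p: "f p \<le> f x - grad x \<bullet> F + L / 2 * (norm F)\<^sup>2"
    using descent_lemma[OF f_deriv grad_Lipschitz, of p x]
    by (simp add: F inner_diff_right norm_minus_commute)
  have "mur * (norm e)\<^sup>2 \<le> (Lam *v F) \<bullet> e - g \<bullet> e + grad xstar \<bullet> e"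
    using r_prox r_min by (simp add: inner_diff_left)
  moreover have "grad x \<bullet> e = grad x \<bullet> d - grad x \<bullet> F" unfolding e by (simp add: inner_diff_right)
  then have "muf / 2 * ((norm d)\<^sup>2 + (norm e)\<^sup>2) - L / 2 * (norm F)\<^sup>2 \<le> grad x \<bullet> e - grad xstar \<bullet> e"
    using f_x f_xstar f_p by (simp only: distrib_left)
  moreover have "(grad x - g) \<bullet> e = grad x \<bullet> e - g \<bullet> e" by (simp add: inner_diff_left)
  ultimately have "muf * (norm d)\<^sup>2 + (muf + 2 * mur) * (norm e)\<^sup>2
      \<le> 2 * ((Lam *v F) \<bullet> e) + 2 * ((grad x - g) \<bullet> e) + L * (norm F)\<^sup>2"
    by (simp add: algebra_simps)
  moreover have "0 \<le> (muf + mur) * (norm e)\<^sup>2" using mu_pos by simp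
  moreover have "(norm e)\<^sup>2 = (norm d)\<^sup>2 - 2 * (d \<bullet> F) + (norm F)\<^sup>2"
    unfolding e by (simp only: power2_norm_eq_inner) (simp add: inner_diff_left inner_diff_right inner_commute)
  moreover have "(Lam *v F) \<bullet> e = (Lam *v F) \<bullet> d - lnorm2 Lam F"
    unfolding e lnorm2_def by (simp add: inner_diff_right inner_commute)
  moreover have "(grad x - g) \<bullet> e = (grad x - g) \<bullet> d - (grad x - g) \<bullet> F"
    unfolding e by (simp add: inner_diff_right)
  ultimately show ?thesis by (simp add: algebra_simps)
qed

lemma residual_inequality:
  fixes x g :: "real^'n"
  defines "F \<equiv> Fres Lam r D g x"
  shows "(muf + mur) * (norm (x - xstar))\<^sup>2
    \<le> 2 * ((lM + mur) * norm F + norm (grad x - g)) * norm (x - xstar)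
      + ((L - 2 * lm - mur) * (norm F)\<^sup>2 + 2 * norm F * norm (grad x - g))"
proof -
  define d where "d = x - xstar"
  have "(Lam *v F) \<bullet> d \<le> lM * norm F * norm d"
    using lnorm2_bilinear_le[OF Lam_spd Lam_upper lM_nonneg] .
  moreover have "mur * (d \<bullet> F) \<le> mur * (norm d * norm F)"
    using mur_nonneg by (intro mult_left_mono norm_cauchy_schwarz)
  moreover have "lm * (norm F)\<^sup>2 \<le> lnorm2 Lam F" by (rule Lam_lower)
  moreover have "(grad x - g) \<bullet> d \<le> norm (grad x - g) * norm d" by (rule norm_cauchy_schwarz)
  moreover have "- ((grad x - g) \<bullet> F) \<le> norm (grad x - g) * norm F"
    using norm_cauchy_schwarz[of "g - grad x" F] by (simp add: inner_diff_left norm_minus_commute)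
  ultimately show ?thesis unfolding d_def[symmetric]
    using residual_inner_inequality[of x g, folded F_def d_def] by (simp add: algebra_simps)
qed

lemma error_bound_exact:
  "(norm (x - xstar))\<^sup>2 \<le> (1 + 0) / (muf + mur)
      * (sqrt (L - 2 * lm - mur + (lM + mur)\<^sup>2 / (muf + mur) + 0) + sqrt ((lM + mur)\<^sup>2 / (muf + mur)))\<^sup>2
      * (norm (Fres Lam r D (grad x) x))\<^sup>2"
proof -
  have "0 \<le> lM + mur" using lM_nonneg mur_nonneg by simp
  have "(norm (x - xstar))\<^sup>2
      \<le> ((lM + mur + sqrt ((lM + mur)\<^sup>2 + (muf + mur) * (L - 2 * lm - mur))) / (muf + mur))\<^sup>2
        * (norm (Fres Lam r D (grad x) x))\<^sup>2"
    using residual_inequality[of x "grad x"]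
    by (intro quadratic_error_bound[OF mu_pos \<open>0 \<le> lM + mur\<close> norm_ge_zero norm_ge_zero]) simp
  also have "((lM + mur + sqrt ((lM + mur)\<^sup>2 + (muf + mur) * (L - 2 * lm - mur))) / (muf + mur))\<^sup>2
      = (1 + 0) / (muf + mur)
        * (sqrt (L - 2 * lm - mur + (lM + mur)\<^sup>2 / (muf + mur) + 0) + sqrt ((lM + mur)\<^sup>2 / (muf + mur)))\<^sup>2"
    using error_coefficient_eq[OF mu_pos \<open>0 \<le> lM + mur\<close>, of 1] by simp
  finally show ?thesis .
qed

lemma error_bound_noisy:
  assumes "0 < \<tau>"
  shows "(norm (x - xstar))\<^sup>2 \<le> (1 + \<tau>) / (muf + mur)
      * (sqrt (L - 2 * lm - mur + (lM + mur)\<^sup>2 / (muf + mur) + \<tau>) + sqrt ((lM + mur)\<^sup>2 / (muf + mur)))\<^sup>2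
      * (norm (Fres Lam r D g x))\<^sup>2
    + noise_coeff \<tau> (muf + mur) (lM + mur) * (norm (grad x - g))\<^sup>2"
proof -
  have "0 \<le> lM + mur" using lM_nonneg mur_nonneg by simp
  have "(norm (x - xstar))\<^sup>2 \<le> (1 + \<tau>) * ((lM + mur + sqrt ((lM + mur)\<^sup>2 + (muf + mur) * (L - 2 * lm - mur + \<tau>))) / (muf + mur))\<^sup>2
        * (norm (Fres Lam r D g x))\<^sup>2
      + (1 + 1 / \<tau>) * ((2 + (lM + mur + (muf + mur)) / sqrt ((muf + mur) * \<tau>)) / (muf + mur))\<^sup>2
        * (norm (grad x - g))\<^sup>2"
    by (rule perturbed_quadratic_error_bound[OF mu_pos \<open>0 \<le> lM + mur\<close> norm_ge_zero norm_ge_zero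
          norm_ge_zero \<open>0 < \<tau>\<close> discriminant_nonneg residual_inequality])
  also have "(1 + \<tau>) * ((lM + mur + sqrt ((lM + mur)\<^sup>2 + (muf + mur) * (L - 2 * lm - mur + \<tau>))) / (muf + mur))\<^sup>2
      = (1 + \<tau>) / (muf + mur)
        * (sqrt (L - 2 * lm - mur + (lM + mur)\<^sup>2 / (muf + mur) + \<tau>) + sqrt ((lM + mur)\<^sup>2 / (muf + mur)))\<^sup>2"
  proof -
    have "L - 2 * lm - mur + (lM + mur)\<^sup>2 / (muf + mur) + \<tau> = (L - 2 * lm - mur + \<tau>) + (lM + mur)\<^sup>2 / (muf + mur)"
      by simp
    then show ?thesis by (simp only: error_coefficient_eq[OF mu_pos \<open>0 \<le> lM + mur\<close>])
  qed
  also have "(1 + 1 / \<tau>) * ((2 + (lM + mur + (muf + mur)) / sqrt ((muf + mur) * \<tau>)) / (muf + mur))\<^sup>2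
      * (norm (grad x - g))\<^sup>2 \<le> noise_coeff \<tau> (muf + mur) (lM + mur) * (norm (grad x - g))\<^sup>2"
    unfolding noise_coeff_def by (intro mult_right_mono) auto
  finally show ?thesis by simp
qed

end

theorem lemma3p3:
  shows "\<exists>B2 :: real \<Rightarrow> real \<Rightarrow> real \<Rightarrow> real \<Rightarrow> real \<Rightarrow> real \<Rightarrow> real.
    (\<forall>\<tau> L muf mur lm lM. B2 \<tau> L muf mur lm lM > 0) \<and>
    (\<forall>(f :: real^'n \<Rightarrow> real) (grad :: real^'n \<Rightarrow> real^'n) (r :: real^'n \<Rightarrow> real)
       (D :: (real^'n) set) (G :: 's \<Rightarrow> real^'n \<Rightarrow> real^'n) (Lam :: real^'n^'n)
       (L :: real) (muf :: real) (mur :: real) (lm :: real) (lM :: real) (xstar :: real^'n).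
     (\<forall>x. (f has_derivative (\<lambda>h. grad x \<bullet> h)) (at x)) \<and> continuous_on UNIV grad \<and>
     proper_convex_lsc r D \<and>
     L > 0 \<and> (\<forall>x y. norm (grad x - grad y) \<le> L * norm (x - y)) \<and>
     mur \<ge> 0 \<and> muf + mur > 0 \<and>
     convex_on UNIV (\<lambda>x. f x - muf / 2 * (norm x)\<^sup>2) \<and>
     convex_on D (\<lambda>x. r x - mur / 2 * (norm x)\<^sup>2) \<and>
     spd Lam \<and> (\<forall>x. lm * (norm x)\<^sup>2 \<le> lnorm2 Lam x \<and> lnorm2 Lam x \<le> lM * (norm x)\<^sup>2) \<and>
     xstar \<in> D \<and> (\<forall>y\<in>D. f xstar + r xstar \<le> f y + r y)
     \<longrightarrow>
     (let b1 = L - 2 * lm - mur; b2 = (lM + mur)\<^sup>2 / (muf + mur);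
          B1 = (\<lambda>\<tau>. (1 + \<tau>) / (muf + mur) * (sqrt (b1 + b2 + \<tau>) + sqrt b2)\<^sup>2) in
      (\<forall>\<tau>>0. \<forall>x s. (norm (x - xstar))\<^sup>2 \<le>
          B1 \<tau> * (norm (Fres Lam r D (G s x) x))\<^sup>2
          + B2 \<tau> L muf mur lm lM * (norm (grad x - G s x))\<^sup>2) \<and>
      (\<forall>x. (norm (x - xstar))\<^sup>2 \<le> B1 0 * (norm (Fres Lam r D (grad x) x))\<^sup>2)))"
proof (intro exI[of _ "\<lambda>\<tau> L muf mur lm lM. noise_coeff \<tau> (muf + mur) (lM + mur)"] conjI allI impI)
  show "0 < noise_coeff \<tau> (muf + mur) (lM + mur)" for \<tau> muf mur lM :: real
    by (simp add: noise_coeff_def)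
  fix f r :: "real^'n \<Rightarrow> real" and grad :: "real^'n \<Rightarrow> real^'n" and D :: "(real^'n) set"
    and Lam :: "real^'n^'n" and L muf mur lm lM :: real and xstar :: "real^'n"
    and G :: "'s \<Rightarrow> real^'n \<Rightarrow> real^'n"
  assume "(\<forall>x. (f has_derivative (\<lambda>h. grad x \<bullet> h)) (at x)) \<and> continuous_on UNIV grad \<and>
     proper_convex_lsc r D \<and> L > 0 \<and> (\<forall>x y. norm (grad x - grad y) \<le> L * norm (x - y)) \<and>
     mur \<ge> 0 \<and> muf + mur > 0 \<and> convex_on UNIV (\<lambda>x. f x - muf / 2 * (norm x)\<^sup>2) \<and>
     convex_on D (\<lambda>x. r x - mur / 2 * (norm x)\<^sup>2) \<and>
     spd Lam \<and> (\<forall>x. lm * (norm x)\<^sup>2 \<le> lnorm2 Lam x \<and> lnorm2 Lam x \<le> lM * (norm x)\<^sup>2) \<and>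
     xstar \<in> D \<and> (\<forall>y\<in>D. f xstar + r xstar \<le> f y + r y)"
  then interpret composite_problem f grad r D Lam L muf mur lm lM xstar
    by unfold_locales auto
  show "let b1 = L - 2 * lm - mur; b2 = (lM + mur)\<^sup>2 / (muf + mur);
          B1 = (\<lambda>\<tau>. (1 + \<tau>) / (muf + mur) * (sqrt (b1 + b2 + \<tau>) + sqrt b2)\<^sup>2) in
      (\<forall>\<tau>>0. \<forall>x s. (norm (x - xstar))\<^sup>2 \<le>
          B1 \<tau> * (norm (Fres Lam r D (G s x) x))\<^sup>2
          + noise_coeff \<tau> (muf + mur) (lM + mur) * (norm (grad x - G s x))\<^sup>2) \<and>
      (\<forall>x. (norm (x - xstar))\<^sup>2 \<le> B1 0 * (norm (Fres Lam r D (grad x) x))\<^sup>2)"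
    unfolding Let_def using error_bound_noisy error_bound_exact by blast
qed

end
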